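(* Let $(c_{i,j})_{0\le i,j\le 3}$ be real numbers satisfying the averaging equation (E0) and the regularity equations (R1)–(R9). Let $$L=\begin{pmatrix} c_{1,1}&c_{0,1}&c_{1,0}&c_{0,0}\\ c_{3,1}&c_{2,1}&c_{3,0}&c_{2,0}\\ c_{1,3}&c_{0,3}&c_{1,2}&c_{0,2}\\ c_{3,3}&c_{2,3}&c_{3,2}&c_{2,2}\end{pmatrix}.$$ Then the eigenvalues of $L$, counted with algebraic multiplicity, are $1$, $\tfrac12$, $\tfrac12$, and $c_{2,2}+c_{3,3}-c_{3,2}-c_{2,3}$.
   Context: (E0): $\sum_{i=0}^3\sum_{j=0}^3 c_{i,j}=4$. Regularity equations: (R1) $c_{0,1}+c_{0,3}+c_{2,1}+c_{2,3}=c_{0,0}+c_{0,2}+c_{2,0}+c_{2,2}$; (R2) $c_{1,1}+c_{1,3}+c_{3,1}+c_{3,3}=c_{0,0}+c_{0,2}+c_{2,0}+c_{2,2}$; (R3) $c_{1,0}+c_{1,2}+c_{3,0}+c_{3,2}=c_{0,0}+c_{0,2}+c_{2,0}+c_{2,2}$; (R4) $c_{2,1}+c_{2,3}=c_{2,0}+c_{2,2}$; (R5) $c_{1,1}+c_{1,3}+3c_{3,1}+3c_{3,3}=2c_{2,0}+2c_{2,2}$; (R6) $c_{1,0}+c_{1,2}+3c_{3,0}+3c_{3,2}=2c_{2,0}+2c_{2,2}$; (R7) $c_{0,1}+c_{2,1}+3c_{0,3}+3c_{2,3}=2c_{0,2}+2c_{2,2}$; (R8) $c_{1,1}+c_{3,1}+3c_{1,3}+3c_{3,3}=2c_{0,2}+2c_{2,2}$;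 (R9) $c_{1,2}+c_{3,2}=c_{0,2}+c_{2,2}$. *)

theory Defs
  imports "Jordan_Normal_Form.Char_Poly"
begin

definition Lmat :: "(nat \<Rightarrow> nat \<Rightarrow> real) \<Rightarrow> real mat" where
  "Lmat c = mat_of_rows_list 4
     [[c 1 1, c 0 1, c 1 0, c 0 0],
      [c 3 1, c 2 1, c 3 0, c 2 0],
      [c 1 3, c 0 3, c 1 2, c 0 2],
      [c 3 3, c 2 3, c 3 2, c 2 2]]"

end

theory Submission
  imports Defs
begin

(* The column sums of L are all 1 by (E0) and (R1)-(R3), i.e. u = (1,1,1,1) is a left
   eigenvector for the eigenvalue 1. Given this, (R4)-(R9) say that p = (0,1,0,1) and
   q = (0,0,1,1) satisfy p L = p/2 + (c22 + c20 - 1/2) u and q L = q/2 + (c22 + c02 - 1/2) u.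
   In the basis r, q, p, u with r = (0,0,0,1), L therefore acts on row vectors by an upper
   triangular matrix; its first row holds the coordinates of r L, the last row of L, and its
   diagonal is c22 + c33 - c32 - c23, 1/2, 1/2, 1. *)

lemma mat_of_rows_list_carrier: "length rs = n \<Longrightarrow> mat_of_rows_list m rs \<in> carrier_mat n m"
  by (simp add: mat_of_rows_list_def)

lemma char_poly_eq_if_intertwined:
  fixes A B P Q :: "'a :: comm_ring_1 mat"
  assumes carrier: "A \<in> carrier_mat n n" "B \<in> carrier_mat n n"
      "P \<in> carrier_mat n n" "Q \<in> carrier_mat n n"
    and inverse: "P * Q = 1\<^sub>m n" "Q * P = 1\<^sub>m n"
    and intertwine: "P * A = B * P"
  shows "char_poly A = char_poly B"
proof -
  have "A = Q * P * A" using carrier inverse by simp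
  also have "\<dots> = Q * (B * P)" using carrier intertwine by (simp add: assoc_mult_mat[of Q n n P n])
  also have "\<dots> = Q * B * P" using carrier by (simp add: assoc_mult_mat[of Q n n B n])
  finally show ?thesis
    using carrier inverse by (intro char_poly_similar similar_matI) auto
qed

definition triang_basis :: "real mat" where
  "triang_basis = mat_of_rows_list 4 [[0, 0, 0, 1], [0, 0, 1, 1], [0, 1, 0, 1], [1, 1, 1, 1]]"

definition triang_basis_inv :: "real mat" where
  "triang_basis_inv = mat_of_rows_list 4 [[1, -1, -1, 1], [-1, 0, 1, 0], [-1, 1, 0, 0], [1, 0, 0, 0]]"

definition Ltriang :: "(nat \<Rightarrow> nat \<Rightarrow> real) \<Rightarrow> real mat" where
  "Ltriang c = mat_of_rows_list 4
     [[c 2 2 + c 3 3 - c 3 2 - c 2 3, c 3 2 - c 3 3, c 2 3 - c 3 3, c 3 3],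
      [0, 1/2, 0, c 0 2 + c 2 2 - 1/2],
      [0, 0, 1/2, c 2 0 + c 2 2 - 1/2],
      [0, 0, 0, 1]]"

lemma triang_basis_inverse:
  "triang_basis * triang_basis_inv = 1\<^sub>m 4" "triang_basis_inv * triang_basis = 1\<^sub>m 4"
  unfolding triang_basis_def triang_basis_inv_def
  by (rule eq_matI; auto simp: mat_of_rows_list_def scalar_prod_def numeral_eq_Suc less_Suc_eq)+

lemma upper_triangular_Ltriang: "upper_triangular (Ltriang c)"
  unfolding Ltriang_def upper_triangular_def
  by (auto simp: mat_of_rows_list_def numeral_eq_Suc less_Suc_eq)

lemma diag_mat_Ltriang: "diag_mat (Ltriang c) = [c 2 2 + c 3 3 - c 3 2 - c 2 3, 1/2, 1/2, 1]"
  unfolding Ltriang_def diag_mat_def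
  by (simp add: mat_of_rows_list_def upt_rec)

lemma triang_basis_intertwines_Lmat:
  assumes column_sums: "c 1 1 + c 3 1 + c 1 3 + c 3 3 = 1" "c 0 1 + c 2 1 + c 0 3 + c 2 3 = 1"
      "c 1 0 + c 3 0 + c 1 2 + c 3 2 = 1" "c 0 0 + c 2 0 + c 0 2 + c 2 2 = 1"
    and rows_3_4: "c 1 3 + c 3 3 = c 0 2 + c 2 2 - 1/2" "c 0 3 + c 2 3 = c 0 2 + c 2 2 - 1/2"
      "c 1 2 + c 3 2 = c 0 2 + c 2 2"
    and rows_2_4: "c 3 1 + c 3 3 = c 2 0 + c 2 2 - 1/2" "c 2 1 + c 2 3 = c 2 0 + c 2 2"
      "c 3 0 + c 3 2 = c 2 0 + c 2 2 - 1/2"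
  shows "triang_basis * Lmat c = Ltriang c * triang_basis"
  unfolding triang_basis_def Lmat_def Ltriang_def using column_sums rows_3_4 rows_2_4
  by (intro eq_matI) (auto simp: mat_of_rows_list_def scalar_prod_def numeral_eq_Suc less_Suc_eq)

theorem mainTheorem7:
  fixes c :: "nat \<Rightarrow> nat \<Rightarrow> real"
  assumes E0: "(\<Sum>i\<le>3. \<Sum>j\<le>3. c i j) = 4"
    and R1: "c 0 1 + c 0 3 + c 2 1 + c 2 3 = c 0 0 + c 0 2 + c 2 0 + c 2 2"
    and R2: "c 1 1 + c 1 3 + c 3 1 + c 3 3 = c 0 0 + c 0 2 + c 2 0 + c 2 2"
    and R3: "c 1 0 + c 1 2 + c 3 0 + c 3 2 = c 0 0 + c 0 2 + c 2 0 + c 2 2"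
    and R4: "c 2 1 + c 2 3 = c 2 0 + c 2 2"
    and R5: "c 1 1 + c 1 3 + 3 * c 3 1 + 3 * c 3 3 = 2 * c 2 0 + 2 * c 2 2"
    and R6: "c 1 0 + c 1 2 + 3 * c 3 0 + 3 * c 3 2 = 2 * c 2 0 + 2 * c 2 2"
    and R7: "c 0 1 + c 2 1 + 3 * c 0 3 + 3 * c 2 3 = 2 * c 0 2 + 2 * c 2 2"
    and R8: "c 1 1 + c 3 1 + 3 * c 1 3 + 3 * c 3 3 = 2 * c 0 2 + 2 * c 2 2"
    and R9: "c 1 2 + c 3 2 = c 0 2 + c 2 2"
  shows "char_poly (Lmat c) =
    (\<Prod>a\<in>#{#1, 1/2, 1/2, c 2 2 + c 3 3 - c 3 2 - c 2 3#}. [:- a, 1:])"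
proof -
  have "{..3::nat} = {0, 1, 2, 3}" by auto
  then have E: "c 0 0 + c 0 1 + c 0 2 + c 0 3 + c 1 0 + c 1 1 + c 1 2 + c 1 3
      + c 2 0 + c 2 1 + c 2 2 + c 2 3 + c 3 0 + c 3 1 + c 3 2 + c 3 3 = 4"
    using E0 by (simp add: add_ac)
  have column_sums: "c 1 1 + c 3 1 + c 1 3 + c 3 3 = 1" "c 0 1 + c 2 1 + c 0 3 + c 2 3 = 1"
    "c 1 0 + c 3 0 + c 1 2 + c 3 2 = 1" "c 0 0 + c 2 0 + c 0 2 + c 2 2 = 1"
    using E R1 R2 R3 by linarith+
  have "triang_basis * Lmat c = Ltriang c * triang_basis"
    using column_sums R4 R5 R6 R7 R8 R9 by (intro triang_basis_intertwines_Lmat) linarith+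
  then have "char_poly (Lmat c) = char_poly (Ltriang c)"
    using triang_basis_inverse
    by (intro char_poly_eq_if_intertwined[of _ 4 _ triang_basis triang_basis_inv])
      (simp_all add: Lmat_def Ltriang_def triang_basis_def triang_basis_inv_def
        mat_of_rows_list_carrier)
  also have "\<dots> = (\<Prod>a\<leftarrow>diag_mat (Ltriang c). [:- a, 1:])"
    by (rule char_poly_upper_triangular[of _ 4, OF _ upper_triangular_Ltriang])
      (simp add: Ltriang_def mat_of_rows_list_carrier)
  also have "\<dots> = (\<Prod>a\<in>#mset (diag_mat (Ltriang c)). [:- a, 1:])"
    by (simp flip: prod_mset_prod_list)
  also have "mset (diag_mat (Ltriang c)) = {#1, 1/2, 1/2, c 2 2 + c 3 3 - c 3 2 - c 2 3#}"
    by (simp add: diag_mat_Ltriang add_mset_commute)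
  finally show ?thesis .
qed

end
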